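(* Fix a scenario $i$ and a binary vector $\bar{\boldsymbol{x}}\in\{0,1\}^{\mathcal{J}}$ with $\mathcal{J}^o:=\{j\in\mathcal{J}:\bar x_j=1\}\neq\emptyset$. Let $j_i^*=\arg\max_{j'\in\mathcal{J}^o}u_{ij'}$. Define $$\bar\lambda_i=r_{ij_i^*},\qquad \bar\mu_{ij}=\begin{cases}\big[\max_{j'\in\mathcal{J}^o\setminus\{j_i^*\}}r_{ij'}-\bar\lambda_i\big]_+ & j=j_i^*,\\ 0 & j\in\mathcal{J}\setminus\{j_i^*\},\end{cases}$$ $$\bar\nu_{ij}=\begin{cases}0 & j\in\mathcal{J}^o,\\ \big[r_{ij}-\bar\lambda_i-\sum_{k\in\mathcal{J}:u_{ik}>u_{ij}}\bar\mu_{ik}\big]_+ & j\in\mathcal{J}\setminus\mathcal{J}^o,\end{cases}$$ where $[z]_+=\max\{z,0\}$ and a maximum over the empty set is $-\infty$ (so that $\bar\mu_{ij_i^*}=0$ if $\mathcal{J}^o=\{j_i^*\}$). Then $(\bar\lambda_i,\bar{\boldsymbol\nu}_i,\bar{\boldsymbol\mu}_i)$ is an optimal solution of $\mathrm{[DSP}_i]$ at $\boldsymbol{x}=\bar{\boldsymbol x}$, and the optimal values satisfy $\phi_i(\bar{\boldsymbol x})=r_{ij_i^*}$, equal to the optimal value of $\mathrm{[DSP}_i]$.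
   Context: Let $\mathcal{J}$ be a finite set of options and fix a scenario index $i$. For each $j\in\mathcal{J}$ let $r_{ij}\in\mathbb{R}$ (reward) and $u_{ij}\in\mathbb{R}$ (utility) be given, with the utilities pairwise distinct: $u_{ij}\neq u_{ik}$ for $j\neq k$. For $\boldsymbol x\in\mathbb{R}^{\mathcal{J}}$, the choice subproblem $\mathrm{[SP}_i]$ is the linear program $$\phi_i(\boldsymbol x)=\max_{\boldsymbol y_i}\ \sum_{j\in\mathcal{J}}r_{ij}y_{ij}\ \text{ s.t. }\ \sum_{j\in\mathcal{J}}y_{ij}=1;\ \ y_{ij}\le x_j\ \forall j\in\mathcal{J};\ \ \sum_{j\in\mathcal{J}:u_{ij}<u_{ik}}y_{ij}+x_k\le 1\ \forall k\in\mathcal{J};\ \ y_{ij}\ge 0\ \forall j.$$ Its LP dual $\mathrm{[DSP}_i]$, with variables $\lambda_i\in\mathbb{R}$, $\boldsymbol\nu_i,\boldsymbol\mu_i\in\mathbb{R}_+^{\mathcal{J}}$, is $$\min\ \lambda_i+\sum_{j\in\mathcal{J}}\mu_{ij}+\sum_{j\in\mathcal{J}}(\nu_{ij}-\mu_{ij})x_j\ \text{ s.t. }\ r_{ij}-\lambda_i-\nu_{ij}-\sum_{k\in\mathcal{J}:u_{ik}>u_{ij}}\mu_{ik}\le 0\ \ \forall j\in\mathcal{J},\ \ \boldsymbol\nu_i,\boldsymbol\mu_i\ge 0.$$ *)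

theory Defs
  imports Main "HOL.Real"
begin

text \<open>Choice subproblem [SP_i] for a fixed scenario i: options J, rewards r, utilities u.
  Vectors indexed by J are functions 'j => real (values outside J are irrelevant).\<close>

definition sp_feasible :: "'j set \<Rightarrow> ('j \<Rightarrow> real) \<Rightarrow> ('j \<Rightarrow> real) \<Rightarrow> ('j \<Rightarrow> real) \<Rightarrow> bool" where
  "sp_feasible J u x y \<longleftrightarrow>
     (\<Sum>j\<in>J. y j) = 1 \<and>
     (\<forall>j\<in>J. y j \<le> x j) \<and>
     (\<forall>k\<in>J. (\<Sum>j\<in>{j\<in>J. u j < u k}. y j) + x k \<le> 1) \<and>
     (\<forall>j\<in>J. 0 \<le> y j)"

definition sp_obj :: "'j set \<Rightarrow> ('j \<Rightarrow> real) \<Rightarrow> ('j \<Rightarrow> real) \<Rightarrow> real" where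
  "sp_obj J r y = (\<Sum>j\<in>J. r j * y j)"

definition phi :: "'j set \<Rightarrow> ('j \<Rightarrow> real) \<Rightarrow> ('j \<Rightarrow> real) \<Rightarrow> ('j \<Rightarrow> real) \<Rightarrow> real" where
  "phi J r u x = Sup (sp_obj J r ` {y. sp_feasible J u x y})"

definition dsp_feasible :: "'j set \<Rightarrow> ('j \<Rightarrow> real) \<Rightarrow> ('j \<Rightarrow> real) \<Rightarrow> real \<Rightarrow> ('j \<Rightarrow> real) \<Rightarrow> ('j \<Rightarrow> real) \<Rightarrow> bool" where
  "dsp_feasible J r u lam nu mu \<longleftrightarrow>
     (\<forall>j\<in>J. r j - lam - nu j - (\<Sum>k\<in>{k\<in>J. u k > u j}. mu k) \<le> 0) \<and>
     (\<forall>j\<in>J. 0 \<le> nu j) \<and> (\<forall>j\<in>J. 0 \<le> mu j)"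

definition dsp_obj :: "'j set \<Rightarrow> ('j \<Rightarrow> real) \<Rightarrow> real \<Rightarrow> ('j \<Rightarrow> real) \<Rightarrow> ('j \<Rightarrow> real) \<Rightarrow> real" where
  "dsp_obj J x lam nu mu = lam + (\<Sum>j\<in>J. mu j) + (\<Sum>j\<in>J. (nu j - mu j) * x j)"

definition dsp_optimal :: "'j set \<Rightarrow> ('j \<Rightarrow> real) \<Rightarrow> ('j \<Rightarrow> real) \<Rightarrow> ('j \<Rightarrow> real) \<Rightarrow> real \<Rightarrow> ('j \<Rightarrow> real) \<Rightarrow> ('j \<Rightarrow> real) \<Rightarrow> bool" where
  "dsp_optimal J r u x lam nu mu \<longleftrightarrow> dsp_feasible J r u lam nu mu \<and>
     (\<forall>lam' nu' mu'. dsp_feasible J r u lam' nu' mu' \<longrightarrow> dsp_obj J x lam nu mu \<le> dsp_obj J x lam' nu' mu')"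

definition dsp_value :: "'j set \<Rightarrow> ('j \<Rightarrow> real) \<Rightarrow> ('j \<Rightarrow> real) \<Rightarrow> ('j \<Rightarrow> real) \<Rightarrow> real" where
  "dsp_value J r u x = Inf {dsp_obj J x lam nu mu | lam nu mu. dsp_feasible J r u lam nu mu}"

end

theory Submission
  imports Defs
begin

text \<open>Weak LP duality between [SP] and [DSP] makes every dual objective value an upper bound
  for every primal one. At the binary point the primal vertex putting all weight on the
  top-utility offered option \<open>js\<close> earns \<open>r js\<close>; the proposed dual point has objective \<open>\<lambda> = r js\<close>
  because \<open>\<nu>\<close> vanishes on the offered options and \<open>\<mu>\<close> lives on \<open>js\<close>, where its two occurrences
  cancel, and it is feasible because \<open>\<mu> js\<close> covers the reward of every other offered option
  while \<open>\<nu>\<close> is exactly the remaining slack. Equal objectives certify optimality of both.\<close>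

lemma sp_dsp_weak_duality:
  assumes "finite J" and "sp_feasible J u x y" and "dsp_feasible J r u lam nu mu"
  shows "sp_obj J r y \<le> dsp_obj J x lam nu mu"
proof -
  let ?M = "\<lambda>j. \<Sum>k\<in>{k\<in>J. u j < u k}. mu k"
  let ?Y = "\<lambda>k. \<Sum>j\<in>{j\<in>J. u j < u k}. y j"
  from assms(2) have sum_y: "(\<Sum>j\<in>J. y j) = 1" and y_le: "\<forall>j\<in>J. y j \<le> x j"
    and below: "\<forall>k\<in>J. ?Y k + x k \<le> 1" and y_nonneg: "\<forall>j\<in>J. 0 \<le> y j"
    unfolding sp_feasible_def by auto
  from assms(3) have dual: "\<forall>j\<in>J. r j \<le> lam + nu j + ?M j"
    and nu_nonneg: "\<forall>j\<in>J. 0 \<le> nu j" and mu_nonneg: "\<forall>j\<in>J. 0 \<le> mu j"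
    unfolding dsp_feasible_def by auto
  have "sp_obj J r y \<le> (\<Sum>j\<in>J. (lam + nu j + ?M j) * y j)"
    unfolding sp_obj_def using dual y_nonneg by (intro sum_mono mult_right_mono) auto
  also have "\<dots> = lam * (\<Sum>j\<in>J. y j) + (\<Sum>j\<in>J. nu j * y j)
      + (\<Sum>j\<in>J. \<Sum>k\<in>{k\<in>J. u j < u k}. mu k * y j)"
    by (simp add: distrib_right sum.distrib sum_distrib_left sum_distrib_right)
  also have "(\<Sum>j\<in>J. \<Sum>k\<in>{k\<in>J. u j < u k}. mu k * y j) = (\<Sum>k\<in>J. mu k * ?Y k)"
    using sum.swap_restrict[OF assms(1) assms(1), of "\<lambda>j k. mu k * y j" "\<lambda>j k. u j < u k"]
    by (simp add: sum_distrib_left)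
  also have "lam * (\<Sum>j\<in>J. y j) + (\<Sum>j\<in>J. nu j * y j) + (\<Sum>k\<in>J. mu k * ?Y k)
      \<le> lam + (\<Sum>j\<in>J. nu j * x j) + (\<Sum>k\<in>J. mu k * (1 - x k))"
    unfolding sum_y using nu_nonneg mu_nonneg y_le below
    by (intro add_mono order.refl sum_mono mult_left_mono) auto
  also have "\<dots> = dsp_obj J x lam nu mu"
    by (simp add: dsp_obj_def algebra_simps sum.distrib sum_subtractf)
  finally show ?thesis .
qed

lemma dsp_optimal_if_eq_sp_obj:
  assumes "finite J" and "sp_feasible J u x y" and "dsp_feasible J r u lam nu mu"
    and "dsp_obj J x lam nu mu = sp_obj J r y"
  shows "dsp_optimal J r u x lam nu mu"
  using assms sp_dsp_weak_duality unfolding dsp_optimal_def by metis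

lemma dsp_value_eq_if_optimal:
  assumes "dsp_optimal J r u x lam nu mu"
  shows "dsp_value J r u x = dsp_obj J x lam nu mu"
  using assms unfolding dsp_value_def dsp_optimal_def by (intro cInf_eq_minimum) blast+

lemma phi_eqI:
  assumes "sp_feasible J u x y" and "sp_obj J r y = v"
    and "\<And>y'. sp_feasible J u x y' \<Longrightarrow> sp_obj J r y' \<le> v"
  shows "phi J r u x = v"
  using assms unfolding phi_def by (intro cSup_eq_maximum) blast+

lemma sp_feasible_single_option:
  assumes "finite J" and "js \<in> J" and "x js = 1" and "\<forall>k\<in>J. 0 \<le> x k \<and> x k \<le> 1"
    and "\<forall>k\<in>J. u js < u k \<longrightarrow> x k = 0"
  shows "sp_feasible J u x (\<lambda>j. if j = js then 1 else 0)"
  unfolding sp_feasible_def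
proof (intro conjI ballI)
  fix k assume "k \<in> J"
  have "(\<Sum>j\<in>{j\<in>J. u j < u k}. if j = js then 1 else 0) = (if u js < u k then 1 else (0::real))"
    using assms(1,2) by simp
  then show "(\<Sum>j\<in>{j\<in>J. u j < u k}. if j = js then 1 else 0) + x k \<le> 1"
    using assms(4,5) \<open>k \<in> J\<close> by auto
qed (use assms in auto)

lemma sp_obj_single_option:
  assumes "finite J" and "js \<in> J"
  shows "sp_obj J r (\<lambda>j. if j = js then 1 else 0) = r js"
  using assms by (simp add: sp_obj_def if_distrib cong: if_cong)

lemma sum_single_support:
  assumes "finite A" and "\<forall>k\<in>A. k \<noteq> a \<longrightarrow> f k = 0"
  shows "sum f A = (if a \<in> A then f a else 0)"
proof -
  have "sum f A = (\<Sum>k\<in>A. if k = a then f a else 0)"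
    using assms(2) by (intro sum.cong) auto
  then show ?thesis using assms(1) by simp
qed

lemma dsp_obj_complementary:
  assumes "finite J" and "js \<in> J" and "x js = 1"
    and "\<forall>j\<in>J. j \<noteq> js \<longrightarrow> mu j = 0" and "\<forall>j\<in>J. x j \<noteq> 0 \<longrightarrow> nu j = 0"
  shows "dsp_obj J x lam nu mu = lam"
proof -
  have "(\<Sum>j\<in>J. mu j) = mu js" and "(\<Sum>j\<in>J. (nu j - mu j) * x j) = - mu js"
    using sum_single_support[of J js mu] sum_single_support[of J js "\<lambda>j. (nu j - mu j) * x j"]
      assms by auto
  then show ?thesis by (simp add: dsp_obj_def)
qed

lemma dsp_feasible_slack:
  assumes "\<forall>j\<in>J. 0 \<le> mu j" and "\<forall>j\<in>Jo. nu j = 0"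
    and "\<forall>j\<in>J - Jo. nu j = max (r j - lam - (\<Sum>k\<in>{k\<in>J. u k > u j}. mu k)) 0"
    and "\<forall>j\<in>Jo. r j - lam \<le> (\<Sum>k\<in>{k\<in>J. u k > u j}. mu k)"
  shows "dsp_feasible J r u lam nu mu"
  unfolding dsp_feasible_def
proof (intro conjI ballI)
  fix j assume "j \<in> J"
  let ?S = "\<Sum>k\<in>{k\<in>J. u k > u j}. mu k"
  show "0 \<le> nu j" using assms(2,3) \<open>j \<in> J\<close> by (cases "j \<in> Jo") auto
  show "r j - lam - nu j - ?S \<le> 0"
  proof (cases "j \<in> Jo")
    case True
    then show ?thesis using assms(2,4) by auto
  next
    case False
    then have "nu j = max (r j - lam - ?S) 0" using assms(3) \<open>j \<in> J\<close> by blast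
    then show ?thesis by linarith
  qed
qed (use assms(1) in blast)

lemma top_offered_option:
  fixes u x :: "'j \<Rightarrow> real"
  assumes "inj_on u J" and "\<forall>j\<in>J. x j \<in> {0, 1}" and Jo_def: "Jo = {j\<in>J. x j = 1}"
    and "js \<in> Jo" and js_max: "\<forall>j\<in>Jo. u j \<le> u js"
  shows "\<forall>j\<in>Jo - {js}. u j < u js" and "\<forall>k\<in>J. u js < u k \<longrightarrow> x k = 0"
proof -
  show "\<forall>j\<in>Jo - {js}. u j < u js"
  proof
    fix j assume j: "j \<in> Jo - {js}"
    then have "u j \<noteq> u js" using assms(1,4) unfolding Jo_def by (auto dest: inj_onD)
    then show "u j < u js" using js_max j by (simp add: order_le_neq_trans)
  qed
  show "\<forall>k\<in>J. u js < u k \<longrightarrow> x k = 0"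
  proof (intro ballI impI)
    fix k assume "k \<in> J" and "u js < u k"
    then have "k \<notin> Jo" using js_max leD by blast
    then show "x k = 0" using assms(2) \<open>k \<in> J\<close> unfolding Jo_def by auto
  qed
qed

lemma top_option_mu_covers:
  fixes u r mu :: "'j \<Rightarrow> real"
  assumes "finite J" and "Jo \<subseteq> J" and "js \<in> Jo"
    and below_js: "\<forall>j\<in>Jo - {js}. u j < u js"
    and mu_def: "\<forall>j. mu j = (if j = js then
                   (if Jo - {js} = {} then 0 else max (Max (r ` (Jo - {js})) - r js) 0) else 0)"
    and j: "j \<in> Jo"
  shows "r j - r js \<le> (\<Sum>k\<in>{k\<in>J. u k > u j}. mu k)"
proof -
  have sum_mu: "(\<Sum>k\<in>{k\<in>J. u k > u j}. mu k) = (if u j < u js then mu js else 0)"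
    using sum_single_support[of "{k\<in>J. u k > u j}" js mu] assms(1-3) mu_def by auto
  show ?thesis
  proof (cases "j = js")
    case True
    then show ?thesis using sum_mu by simp
  next
    case False
    then have "r j \<le> Max (r ` (Jo - {js}))"
      using j assms(1,2) by (intro Max_ge) (auto intro: finite_subset)
    then show ?thesis using False below_js j sum_mu mu_def[rule_format, of js] by auto
  qed
qed

theorem proposition1:
  fixes J :: "'j set" and r u xb :: "'j \<Rightarrow> real" and js :: 'j
    and Jo :: "'j set" and lamb :: real and mub nub :: "'j \<Rightarrow> real"
  assumes finJ: "finite J"
    and u_inj: "inj_on u J"
    and xb_bin: "\<forall>j\<in>J. xb j \<in> {0, 1}"
    and Jo_def: "Jo = {j\<in>J. xb j = 1}"
    and Jo_ne: "Jo \<noteq> {}"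
    and js_mem: "js \<in> Jo"
    and js_max: "\<forall>j'\<in>Jo. u j' \<le> u js"
    and lamb_def: "lamb = r js"
    and mub_def: "\<forall>j. mub j = (if j = js then
                     (if Jo - {js} = {} then 0 else max (Max (r ` (Jo - {js})) - lamb) 0)
                   else 0)"
    and nub_def: "\<forall>j. nub j = (if j \<in> Jo then 0
                   else max (r j - lamb - (\<Sum>k\<in>{k\<in>J. u k > u j}. mub k)) 0)"
  shows "dsp_optimal J r u xb lamb nub mub
    \<and> (\<exists>y. sp_feasible J u xb y \<and> sp_obj J r y = r js)
    \<and> (\<forall>y. sp_feasible J u xb y \<longrightarrow> sp_obj J r y \<le> r js)
    \<and> phi J r u xb = r js
    \<and> dsp_obj J xb lamb nub mub = r js
    \<and> dsp_value J r u xb = r js"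
proof -
  have "js \<in> J" "xb js = 1" "Jo \<subseteq> J" using js_mem Jo_def by auto
  note below_js = top_offered_option(1)[OF u_inj xb_bin Jo_def js_mem js_max]
  define y where "y = (\<lambda>j. if j = js then 1 else (0::real))"
  have "\<forall>k\<in>J. 0 \<le> xb k \<and> xb k \<le> 1" using xb_bin by auto
  then have y_feasible: "sp_feasible J u xb y"
    using sp_feasible_single_option[of J js xb u] finJ \<open>js \<in> J\<close> \<open>xb js = 1\<close>
      top_offered_option(2)[OF u_inj xb_bin Jo_def js_mem js_max]
    unfolding y_def by blast
  have y_obj: "sp_obj J r y = r js"
    using sp_obj_single_option[of J js r] finJ \<open>js \<in> J\<close> unfolding y_def by blast
  have "\<forall>j\<in>Jo. r j - lamb \<le> (\<Sum>k\<in>{k\<in>J. u k > u j}. mub k)"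
    using top_option_mu_covers[OF finJ \<open>Jo \<subseteq> J\<close> js_mem below_js mub_def[unfolded lamb_def]]
    unfolding lamb_def by blast
  then have dual_feasible: "dsp_feasible J r u lamb nub mub"
    using mub_def nub_def by (intro dsp_feasible_slack) auto
  have dual_obj: "dsp_obj J xb lamb nub mub = r js"
  proof -
    have "\<forall>j\<in>J. xb j \<noteq> 0 \<longrightarrow> nub j = 0" using xb_bin nub_def unfolding Jo_def by auto
    then show ?thesis
      using dsp_obj_complementary[of J js xb mub nub lamb] finJ \<open>js \<in> J\<close> \<open>xb js = 1\<close> mub_def lamb_def
      by auto
  qed
  have optimal: "dsp_optimal J r u xb lamb nub mub"
    using dsp_optimal_if_eq_sp_obj finJ y_feasible dual_feasible dual_obj y_obj by metis
  have primal_bound: "\<forall>y'. sp_feasible J u xb y' \<longrightarrow> sp_obj J r y' \<le> r js"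
    using sp_dsp_weak_duality[OF finJ _ dual_feasible, of xb] dual_obj by simp
  show ?thesis
    using optimal y_feasible y_obj primal_bound phi_eqI[OF y_feasible y_obj] dual_obj
      dsp_value_eq_if_optimal[OF optimal] by auto
qed

end
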